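(* Let $\hat\beta=\arg\min_{\beta\in[\beta_{\min},\beta_{\max}]}\frac1n\sum_{i=1}^n\|x_i-\beta\nabla u_{\theta_i}(x_i)\|^2$ and $\beta^*=\arg\min_{\beta\in[\beta_{\min},\beta_{\max}]}\mathbb E\|\tilde x-\beta\nabla u_{\tilde\theta}(\tilde x)\|^2$. Suppose $\mathbb E\|\nabla u_{\tilde\theta}(\tilde x)\|^2>0$ and that $\tilde x$ and $\nabla u_{\tilde\theta}(\tilde x)$ are subgaussian vectors. Then there are constants $C,C'>0$ (not depending on $n,\delta$) such that if $\frac{n}{\log n}\ge C(1+\log(1/\delta))$, then with probability $1-\delta$, $$|\hat\beta-\beta^*|\le C'\sqrt{\log n}\sqrt{\frac{1+\log(1/\delta)}{n}}.$$
   Context: $0<\beta_{\min}\le\beta_{\max}$; for each $\theta\in\Theta$, $u_\theta:\mathbb R^{d_x}\to\mathbb R$ is differentiable. $(\theta_i,x_i,y_i)$, $i\le n$, are i.i.d. copies of $(\tilde\theta,\tilde x,\tilde y)$ where $\tilde\theta\sim\tilde{\mathcal D}$ (an exploration distribution on $\Theta$) and $(\tilde x,\tilde y)\mid\tilde\theta\sim\mathcal D(\tilde\theta)$ for the true distribution map $\mathcal D$. A random variable $x$ is subgaussian with parameter $\sigma$ if $\mathbb P(|x|\ge t)\le2e^{-t^2/\sigma^2}$ for all $t\ge0$; a vector is subgaussian if every unit projection is. *)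

theory Defs
  imports "HOL-Analysis.Analysis" "HOL-Probability.Probability"
begin

definition grad :: "('a::real_inner \<Rightarrow> real) \<Rightarrow> 'a \<Rightarrow> 'a" where
  "grad f x = (THE D. GDERIV f x :> D)"

definition subgaussian_param :: "'a measure \<Rightarrow> ('a \<Rightarrow> real) \<Rightarrow> real \<Rightarrow> bool" where
  "subgaussian_param P f \<sigma> \<longleftrightarrow>
     (\<forall>t\<ge>0. measure P {z \<in> space P. \<bar>f z\<bar> \<ge> t} \<le> 2 * exp (- (t\<^sup>2 / \<sigma>\<^sup>2)))"

definition subgaussian_vec :: "'a measure \<Rightarrow> ('a \<Rightarrow> 'b::real_inner) \<Rightarrow> bool" where
  "subgaussian_vec P f \<longleftrightarrow>
     f \<in> borel_measurable P \<and>
     (\<exists>\<sigma>>0. \<forall>v. norm v = 1 \<longrightarrow> subgaussian_param P (\<lambda>z. v \<bullet> f z) \<sigma>)"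

end

theory Submission
  imports Defs
begin

text \<open>Both risks are quadratics \<open>Q - 2\<beta>A + \<beta>\<^sup>2B\<close> in \<open>\<beta>\<close>, so both minimisers are clipped ratios
  \<open>A/B\<close>: for \<open>\<beta>\<^sup>*\<close> with \<open>A = E[x \<bullet> \<nabla>u]\<close>, \<open>B = E\<parallel>\<nabla>u\<parallel>\<^sup>2 > 0\<close>, and for \<open>\<beta>hat\<close> with the
  corresponding sample means. Clipping is 1-Lipschitz and \<open>A/B\<close> is Lipschitz near \<open>B > 0\<close>, so it
  suffices that both sample means are within \<open>t\<close> of their expectations. Subgaussianity of \<open>x\<close> and
  \<open>\<nabla>u\<close> gives the summands exponential moments, hence a bound \<open>E exp(r(Y - EY)) \<le> exp(Kr\<^sup>2)\<close> for
  small \<open>|r|\<close>, and a Chernoff bound yields deviation probability \<open>4exp(-nt\<^sup>2/(4K))\<close>. Taking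
  \<open>t\<^sup>2 \<asymp> (1 + ln(1/\<delta>))/n\<close> makes this at most \<open>\<delta>\<close>; the assumption on \<open>n/ln n\<close> keeps \<open>t\<close>
  inside the range where the moment generating function bound holds.\<close>

lemma is_arg_min_quadratic_on_interval:
  fixes lo hi A B c b :: real
  assumes "lo \<le> hi" "B > 0"
    and am: "is_arg_min (\<lambda>\<beta>. c - 2*\<beta>*A + \<beta>\<^sup>2*B) (\<lambda>\<beta>. \<beta> \<in> {lo..hi}) b"
  shows "b = max lo (min hi (A/B))"
proof (rule ccontr)
  assume ne: "b \<noteq> max lo (min hi (A/B))"
  define v where "v = A/B"
  define p where "p = max lo (min hi v)"
  have pin: "p \<in> {lo..hi}" using assms(1) by (auto simp: p_def)
  have bin: "b \<in> {lo..hi}" using am by (simp add: is_arg_min_def)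
  have square_form: "c - 2*\<beta>*A + \<beta>\<^sup>2*B = (c - v\<^sup>2*B) + B*(\<beta> - v)\<^sup>2" for \<beta>
    using assms(2) by (simp add: v_def power2_eq_square field_simps)
  have "\<bar>p - v\<bar> < \<bar>b - v\<bar>"
    using pin bin ne unfolding p_def v_def[symmetric] by (auto simp: max_def min_def split: if_splits)
  then have "(p - v)\<^sup>2 < (b - v)\<^sup>2"
    by (meson abs_le_square_iff not_le)
  then have "c - 2*p*A + p\<^sup>2*B < c - 2*b*A + b\<^sup>2*B"
    using assms(2) by (simp add: square_form)
  with am pin show False by (auto simp: is_arg_min_def)
qed

lemma abs_max_min_diff_le:
  fixes lo hi v w :: real
  shows "\<bar>max lo (min hi v) - max lo (min hi w)\<bar> \<le> \<bar>v - w\<bar>"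
  by (auto simp: max_def min_def)

lemma abs_divide_diff_le:
  fixes a b A B t :: real
  assumes B: "B > 0" and ha: "\<bar>a - A\<bar> \<le> t" and hb: "\<bar>b - B\<bar> \<le> t" and t: "t \<le> B/2"
  shows "\<bar>a/b - A/B\<bar> \<le> 2*(B + \<bar>A\<bar>)/B\<^sup>2 * t"
proof -
  have b: "b \<ge> B/2" using hb t by linarith
  have bpos: "b > 0" using b B by linarith
  have t0: "t \<ge> 0" using ha by linarith
  have num: "\<bar>(a - A)*B - A*(b - B)\<bar> \<le> t*B + \<bar>A\<bar>*t"
  proof -
    have "\<bar>(a - A)*B\<bar> \<le> t*B" using ha B by (simp add: abs_mult mult_right_mono)
    moreover have "\<bar>A*(b - B)\<bar> \<le> \<bar>A\<bar>*t" using hb by (simp add: abs_mult mult_left_mono)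
    ultimately show ?thesis using abs_triangle_ineq4[of "(a - A)*B" "A*(b - B)"] by linarith
  qed
  have den: "B\<^sup>2/2 \<le> b*B" using b B by (simp add: power2_eq_square mult_right_mono)
  have "\<bar>a/b - A/B\<bar> = \<bar>(a - A)*B - A*(b - B)\<bar>/(b*B)"
    using bpos B by (simp add: field_simps abs_divide abs_mult)
  also have "\<dots> \<le> (t*B + \<bar>A\<bar>*t)/(B\<^sup>2/2)"
    by (rule frac_le) (use num den B t0 in auto)
  also have "\<dots> = 2*(B + \<bar>A\<bar>)/B\<^sup>2 * t" using B by (simp add: field_simps power2_eq_square)
  finally show ?thesis .
qed

lemma arg_min_empirical_quadratic_error:
  fixes a b q :: "nat \<Rightarrow> real"
  assumes lohi: "lo \<le> hi" and EB: "EB > 0"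
    and wa: "\<bar>\<Sum>i<n. a i - EA\<bar> < real n * t" and wb: "\<bar>\<Sum>i<n. b i - EB\<bar> < real n * t"
    and t: "t \<le> EB/2"
    and am: "is_arg_min (\<lambda>\<beta>. (1/real n) * (\<Sum>i<n. q i - 2*\<beta>*a i + \<beta>\<^sup>2*b i))
               (\<lambda>\<beta>. \<beta> \<in> {lo..hi}) bh"
  shows "\<bar>bh - max lo (min hi (EA/EB))\<bar> \<le> 2*(EB + \<bar>EA\<bar>)/EB\<^sup>2 * t"
proof -
  have np: "real n > 0" using wa by (cases n) auto
  define Ah where "Ah = (1/real n) * (\<Sum>i<n. a i)"
  define Bh where "Bh = (1/real n) * (\<Sum>i<n. b i)"
  define Qh where "Qh = (1/real n) * (\<Sum>i<n. q i)"
  have "Ah - EA = (\<Sum>i<n. a i - EA) / real n" "Bh - EB = (\<Sum>i<n. b i - EB) / real n"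
    using np by (simp_all add: Ah_def Bh_def sum_subtractf field_simps)
  then have hA: "\<bar>Ah - EA\<bar> \<le> t" and hB: "\<bar>Bh - EB\<bar> \<le> t"
    using wa wb np by (simp_all add: abs_divide pos_divide_le_eq mult.commute)
  have Bh: "Bh > 0" using hB t EB by linarith
  have "(\<Sum>i<n. q i - 2*\<beta>*a i + \<beta>\<^sup>2*b i)
      = (\<Sum>i<n. q i) - 2*\<beta>*(\<Sum>i<n. a i) + \<beta>\<^sup>2*(\<Sum>i<n. b i)" for \<beta>
    by (simp add: sum.distrib sum_subtractf sum_distrib_left)
  then have "(\<lambda>\<beta>. (1/real n) * (\<Sum>i<n. q i - 2*\<beta>*a i + \<beta>\<^sup>2*b i)) = (\<lambda>\<beta>. Qh - 2*\<beta>*Ah + \<beta>\<^sup>2*Bh)"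
    unfolding Qh_def Ah_def Bh_def by (simp only:) (simp add: algebra_simps)
  with am have "bh = max lo (min hi (Ah/Bh))"
    using is_arg_min_quadratic_on_interval[OF lohi Bh] by simp
  then have "\<bar>bh - max lo (min hi (EA/EB))\<bar> \<le> \<bar>Ah/Bh - EA/EB\<bar>"
    by (simp add: abs_max_min_diff_le)
  also have "\<dots> \<le> 2*(EB + \<bar>EA\<bar>)/EB\<^sup>2 * t" by (rule abs_divide_diff_le[OF EB hA hB t])
  finally show ?thesis .
qed

lemma exp_le_suminf_level_indicators:
  fixes x :: real
  assumes "0 \<le> x"
  shows "ennreal (exp x) \<le> (\<Sum>k. ennreal (exp (real k + 1)) * indicator {y. real k \<le> y} x)"
proof -
  define m where "m = nat \<lfloor>x\<rfloor>"
  have m: "real m \<le> x" "x < real m + 1"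
    using assms by (simp_all add: m_def)
  have "ennreal (exp x) \<le> ennreal (exp (real m + 1)) * indicator {y. real m \<le> y} x"
    using m by simp
  also have "\<dots> \<le> (\<Sum>k<Suc m. ennreal (exp (real k + 1)) * indicator {y. real k \<le> y} x)"
    by (rule member_le_sum) auto
  also have "\<dots> \<le> (\<Sum>k. ennreal (exp (real k + 1)) * indicator {y. real k \<le> y} x)"
    by (rule sum_le_suminf) auto
  finally show ?thesis .
qed

lemma subgaussian_param_level_tail:
  assumes "prob_space P" and sg: "subgaussian_param P f \<sigma>" and \<sigma>: "\<sigma> > 0"
  shows "emeasure P {z \<in> space P. real k \<le> (f z)\<^sup>2 / (2*\<sigma>\<^sup>2)} \<le> ennreal (2 * exp (-(2 * real k)))"
proof -
  interpret prob_space P by fact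
  define t where "t = sqrt (2*\<sigma>\<^sup>2 * real k)"
  have "real k \<le> (f z)\<^sup>2 / (2*\<sigma>\<^sup>2) \<longleftrightarrow> t \<le> \<bar>f z\<bar>" for z
  proof -
    have "t \<le> \<bar>f z\<bar> \<longleftrightarrow> t \<le> sqrt ((f z)\<^sup>2)" by simp
    also have "\<dots> \<longleftrightarrow> 2*\<sigma>\<^sup>2 * real k \<le> (f z)\<^sup>2" unfolding t_def by (rule real_sqrt_le_iff)
    also have "\<dots> \<longleftrightarrow> real k \<le> (f z)\<^sup>2 / (2*\<sigma>\<^sup>2)" using \<sigma> by (simp add: pos_le_divide_eq mult.commute)
    finally show ?thesis by simp
  qed
  then have "emeasure P {z \<in> space P. real k \<le> (f z)\<^sup>2 / (2*\<sigma>\<^sup>2)}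
      = ennreal (measure P {z \<in> space P. \<bar>f z\<bar> \<ge> t})"
    by (simp add: emeasure_eq_measure)
  also have "\<dots> \<le> ennreal (2 * exp (- (t\<^sup>2 / \<sigma>\<^sup>2)))"
    by (intro ennreal_leI sg[unfolded subgaussian_param_def, rule_format]) (simp add: t_def)
  also have "t\<^sup>2 / \<sigma>\<^sup>2 = 2 * real k" using \<sigma> by (simp add: t_def)
  finally show ?thesis .
qed

text \<open>Layer cake: on the k-th level set of \<open>f\<^sup>2/(2\<sigma>\<^sup>2)\<close> the integrand is at most \<open>e\<^sup>k\<^sup>+\<^sup>1\<close>,
  while the level set has measure at most \<open>2e\<^sup>-\<^sup>2\<^sup>k\<close>.\<close>
lemma subgaussian_param_exp_square_moment:
  fixes f :: "'a \<Rightarrow> real"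
  assumes P: "prob_space P" and [measurable]: "f \<in> borel_measurable P"
    and sg: "subgaussian_param P f \<sigma>" and \<sigma>: "\<sigma> > 0"
  shows "(\<integral>\<^sup>+z. ennreal (exp ((f z)\<^sup>2 / (2*\<sigma>\<^sup>2))) \<partial>P) < \<infinity>"
proof -
  define S where "S k = {z \<in> space P. real k \<le> (f z)\<^sup>2 / (2*\<sigma>\<^sup>2)}" for k :: nat
  have [measurable]: "S k \<in> sets P" for k unfolding S_def by measurable
  have levels: "ennreal (exp ((f z)\<^sup>2 / (2*\<sigma>\<^sup>2)))
      \<le> (\<Sum>k. ennreal (exp (real k + 1)) * indicator (S k) z)" if "z \<in> space P" for z
    using exp_le_suminf_level_indicators[of "(f z)\<^sup>2 / (2*\<sigma>\<^sup>2)"] that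
    by (simp add: S_def indicator_def)
  have "(\<integral>\<^sup>+z. ennreal (exp ((f z)\<^sup>2 / (2*\<sigma>\<^sup>2))) \<partial>P)
      \<le> (\<integral>\<^sup>+z. (\<Sum>k. ennreal (exp (real k + 1)) * indicator (S k) z) \<partial>P)"
    by (intro nn_integral_mono levels)
  also have "\<dots> = (\<Sum>k. ennreal (exp (real k + 1)) * emeasure P (S k))"
    by (subst nn_integral_suminf) (simp_all add: nn_integral_cmult_indicator)
  also have "\<dots> \<le> (\<Sum>k. ennreal (2 * exp 1 * exp (-1) ^ k))"
  proof (rule suminf_le[OF _ summableI summableI])
    fix k
    have "ennreal (exp (real k + 1)) * emeasure P (S k)
        \<le> ennreal (exp (real k + 1)) * ennreal (2 * exp (-(2 * real k)))"
      unfolding S_def by (intro mult_left_mono subgaussian_param_level_tail[OF P sg \<sigma>]) auto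
    also have "\<dots> = ennreal (2 * exp 1 * exp (-1) ^ k)"
      by (simp add: ennreal_mult[symmetric] exp_of_nat_mult[symmetric] mult_exp_exp algebra_simps
               del: ennreal_mult)
    finally show "ennreal (exp (real k + 1)) * emeasure P (S k) \<le> ennreal (2 * exp 1 * exp (-1) ^ k)" .
  qed
  also have "\<dots> < \<infinity>"
  proof -
    have "summable (\<lambda>k. 2 * exp 1 * exp (-1::real) ^ k)"
      by (intro summable_mult summable_geometric) simp
    then show ?thesis by (simp add: less_top[symmetric] ennreal_suminf_neq_top)
  qed
  finally show ?thesis .
qed

lemma exp_norm_square_le_sum_exp_components:
  fixes y :: "real^'d"
  assumes "b > 0"
  shows "exp ((norm y)\<^sup>2 / (b * real CARD('d))) \<le> (\<Sum>j\<in>UNIV. exp ((y$j)\<^sup>2 / b))"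
proof -
  have "Max (range (\<lambda>j. (y$j)\<^sup>2)) \<in> range (\<lambda>j. (y$j)\<^sup>2)" by (rule Max_in) auto
  then obtain j0 where max: "Max (range (\<lambda>j. (y$j)\<^sup>2)) = (y$j0)\<^sup>2" by blast
  have j0: "(y$j)\<^sup>2 \<le> (y$j0)\<^sup>2" for j
    unfolding max[symmetric] by (rule Max_ge) auto
  have "(norm y)\<^sup>2 = (\<Sum>j\<in>UNIV. (y$j)\<^sup>2)"
    unfolding power2_norm_eq_inner inner_vec_def by (simp add: power2_eq_square)
  also have "\<dots> \<le> real CARD('d) * (y$j0)\<^sup>2"
    using sum_mono[of UNIV "\<lambda>j. (y$j)\<^sup>2" "\<lambda>_. (y$j0)\<^sup>2"] j0 by simp
  finally have "(norm y)\<^sup>2 / (b * real CARD('d)) \<le> (y$j0)\<^sup>2 / b"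
    using assms by (simp add: field_simps)
  then have "exp ((norm y)\<^sup>2 / (b * real CARD('d))) \<le> exp ((y$j0)\<^sup>2 / b)" by simp
  also have "\<dots> \<le> (\<Sum>j\<in>UNIV. exp ((y$j)\<^sup>2 / b))" by (rule member_le_sum) auto
  finally show ?thesis .
qed

lemma subgaussian_vec_exp_norm_square_moment:
  fixes f :: "'a \<Rightarrow> real^'d"
  assumes P: "prob_space P" and sg: "subgaussian_vec P f"
  shows "\<exists>c>0. (\<integral>\<^sup>+z. ennreal (exp (c * (norm (f z))\<^sup>2)) \<partial>P) < \<infinity>"
proof -
  obtain \<sigma> where \<sigma>: "\<sigma> > 0" and sv: "\<And>v. norm v = 1 \<Longrightarrow> subgaussian_param P (\<lambda>z. v \<bullet> f z) \<sigma>"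
    using sg unfolding subgaussian_vec_def by blast
  have [measurable]: "f \<in> borel_measurable P" using sg unfolding subgaussian_vec_def by blast
  have [measurable]: "(\<lambda>z. f z $ j) \<in> borel_measurable P" for j
    using borel_measurable_inner[of "\<lambda>_. axis j 1" P f] by (simp add: inner_axis')
  have components: "subgaussian_param P (\<lambda>z. f z $ j) \<sigma>" for j
    using sv[of "axis j 1"] by (simp add: norm_axis_1 inner_axis')
  define b where "b = 2*\<sigma>\<^sup>2"
  have b: "b > 0" using \<sigma> by (simp add: b_def)
  have "(\<integral>\<^sup>+z. ennreal (exp ((norm (f z))\<^sup>2 / (b * real CARD('d)))) \<partial>P)
      \<le> (\<integral>\<^sup>+z. (\<Sum>j\<in>UNIV. ennreal (exp ((f z $ j)\<^sup>2 / b))) \<partial>P)"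
    using exp_norm_square_le_sum_exp_components[OF b] by (intro nn_integral_mono) (auto intro: ennreal_leI)
  also have "\<dots> = (\<Sum>j\<in>UNIV. \<integral>\<^sup>+z. ennreal (exp ((f z $ j)\<^sup>2 / b)) \<partial>P)"
    by (rule nn_integral_sum) measurable
  also have "\<dots> < \<infinity>"
    using subgaussian_param_exp_square_moment[OF P _ components \<sigma>] by (simp add: b_def)
  finally show ?thesis
    using b by (intro exI[of _ "1 / (b * real CARD('d))"]) (simp add: field_simps)
qed

definition has_exponential_moment :: "'a measure \<Rightarrow> ('a \<Rightarrow> real) \<Rightarrow> bool" where
  "has_exponential_moment P h \<longleftrightarrow> (\<exists>c>0. (\<integral>\<^sup>+z. ennreal (exp (c * \<bar>h z\<bar>)) \<partial>P) < \<infinity>)"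

lemma has_exponential_moment_if_dominated:
  fixes h F1 F2 :: "'a \<Rightarrow> real"
  assumes c1: "c1 > 0" and i1: "(\<integral>\<^sup>+z. ennreal (exp (c1 * F1 z)) \<partial>P) < \<infinity>"
    and c2: "c2 > 0" and i2: "(\<integral>\<^sup>+z. ennreal (exp (c2 * F2 z)) \<partial>P) < \<infinity>"
    and [measurable]: "F1 \<in> borel_measurable P" "F2 \<in> borel_measurable P"
    and nn: "\<And>z. 0 \<le> F1 z" "\<And>z. 0 \<le> F2 z"
    and dom: "\<And>z. \<bar>h z\<bar> \<le> F1 z + F2 z"
  shows "has_exponential_moment P h"
proof -
  define c where "c = min c1 c2 / 2"
  have c: "c > 0" using c1 c2 by (simp add: c_def)
  have "c * \<bar>h z\<bar> \<le> max (c1 * F1 z) (c2 * F2 z)" for z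
  proof -
    have "c * \<bar>h z\<bar> \<le> c * F1 z + c * F2 z"
      using dom[of z] c by (simp add: distrib_left[symmetric] mult_left_mono)
    moreover have "2*c*F1 z \<le> c1*F1 z" "2*c*F2 z \<le> c2*F2 z"
      using nn[of z] by (auto simp: c_def intro: mult_right_mono)
    ultimately show ?thesis by linarith
  qed
  then have "exp (c * \<bar>h z\<bar>) \<le> exp (c1 * F1 z) + exp (c2 * F2 z)" for z
    by (smt (verit) exp_gt_zero exp_le_cancel_iff)
  then have "(\<integral>\<^sup>+z. ennreal (exp (c * \<bar>h z\<bar>)) \<partial>P)
      \<le> (\<integral>\<^sup>+z. ennreal (exp (c1 * F1 z)) + ennreal (exp (c2 * F2 z)) \<partial>P)"
    by (intro nn_integral_mono) (simp add: ennreal_plus[symmetric] del: ennreal_plus)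
  also have "\<dots> = (\<integral>\<^sup>+z. ennreal (exp (c1 * F1 z)) \<partial>P) + (\<integral>\<^sup>+z. ennreal (exp (c2 * F2 z)) \<partial>P)"
    by (rule nn_integral_add) auto
  also have "\<dots> < \<infinity>" using i1 i2 by simp
  finally show ?thesis using c unfolding has_exponential_moment_def by blast
qed

lemma abs_inner_le_norm_square_add:
  fixes x y :: "'a::real_inner"
  shows "\<bar>x \<bullet> y\<bar> \<le> (norm x)\<^sup>2 + (norm y)\<^sup>2"
proof -
  have "\<bar>x \<bullet> y\<bar> \<le> norm x * norm y" by (rule Cauchy_Schwarz_ineq2)
  moreover have "0 \<le> (norm x - norm y)\<^sup>2" by simp
  ultimately show ?thesis by (simp add: power2_eq_square algebra_simps)
qed

lemma subgaussian_vec_inner_exponential_moment: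
  fixes f g :: "'a \<Rightarrow> real^'d"
  assumes P: "prob_space P" and "subgaussian_vec P f" "subgaussian_vec P g"
  shows "has_exponential_moment P (\<lambda>z. f z \<bullet> g z)"
proof -
  have [measurable]: "f \<in> borel_measurable P" "g \<in> borel_measurable P"
    using assms(2,3) unfolding subgaussian_vec_def by blast+
  obtain cf where "cf > 0" "(\<integral>\<^sup>+z. ennreal (exp (cf * (norm (f z))\<^sup>2)) \<partial>P) < \<infinity>"
    using subgaussian_vec_exp_norm_square_moment[OF P assms(2)] by blast
  moreover obtain cg where "cg > 0" "(\<integral>\<^sup>+z. ennreal (exp (cg * (norm (g z))\<^sup>2)) \<partial>P) < \<infinity>"
    using subgaussian_vec_exp_norm_square_moment[OF P assms(3)] by blast
  ultimately show ?thesis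
    by (rule has_exponential_moment_if_dominated) (auto intro: abs_inner_le_norm_square_add)
qed

definition subexponential :: "'a measure \<Rightarrow> ('a \<Rightarrow> real) \<Rightarrow> real \<Rightarrow> real \<Rightarrow> bool" where
  "subexponential P h l K \<longleftrightarrow>
     (\<forall>r. \<bar>r\<bar> \<le> l \<longrightarrow>
        (\<integral>\<^sup>+z. ennreal (exp (r * (h z - (\<integral>z. h z \<partial>P)))) \<partial>P) \<le> ennreal (exp (K * r\<^sup>2)))"

lemma subexponential_mono:
  assumes "subexponential P h l K" "l' \<le> l" "K \<le> K'"
  shows "subexponential P h l' K'"
  unfolding subexponential_def
proof (intro allI impI)
  fix r :: real
  assume "\<bar>r\<bar> \<le> l'"
  then have "(\<integral>\<^sup>+z. ennreal (exp (r * (h z - (\<integral>z. h z \<partial>P)))) \<partial>P) \<le> ennreal (exp (K * r\<^sup>2))"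
    using assms(1,2) unfolding subexponential_def by auto
  also have "\<dots> \<le> ennreal (exp (K' * r\<^sup>2))"
    using assms(3) by (intro ennreal_leI) (simp add: mult_right_mono)
  finally show "(\<integral>\<^sup>+z. ennreal (exp (r * (h z - (\<integral>z. h z \<partial>P)))) \<partial>P) \<le> ennreal (exp (K' * r\<^sup>2))" .
qed

lemma exp_le_one_plus_square_exp_abs: "exp (x::real) \<le> 1 + x + x\<^sup>2/2 * exp \<bar>x\<bar>"
proof -
  obtain t where t: "\<bar>t\<bar> \<le> \<bar>x\<bar>" and e: "exp x = (\<Sum>m<2. x^m / fact m) + exp t / fact 2 * x^2"
    using Maclaurin_exp_le[of x 2] by blast
  have "exp t * x\<^sup>2 \<le> exp \<bar>x\<bar> * x\<^sup>2" using t by (intro mult_right_mono) simp_all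
  then show ?thesis using e by (simp add: numeral_2_eq_2 mult.commute)
qed

lemma exp_mult_le_quadratic_bound:
  fixes r w l :: real
  assumes "\<bar>r\<bar> \<le> l"
  shows "exp (r * w) \<le> 1 + r * w + r\<^sup>2/2 * (w\<^sup>2 * exp (l * \<bar>w\<bar>))"
proof -
  have "exp \<bar>r * w\<bar> \<le> exp (l * \<bar>w\<bar>)"
    using assms by (simp add: abs_mult mult_right_mono)
  then have "r\<^sup>2/2 * w\<^sup>2 * exp \<bar>r * w\<bar> \<le> r\<^sup>2/2 * w\<^sup>2 * exp (l * \<bar>w\<bar>)"
    by (rule mult_left_mono) simp
  then show ?thesis
    using exp_le_one_plus_square_exp_abs[of "r * w"] by (simp add: power_mult_distrib mult.assoc)
qed

lemma square_le_exp_abs: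
  fixes l w :: real
  assumes "l > 0"
  shows "w\<^sup>2 \<le> 2/l\<^sup>2 * exp (l * \<bar>w\<bar>)"
proof -
  have "1 + l*\<bar>w\<bar> + (l*\<bar>w\<bar>)\<^sup>2/2 \<le> exp (l*\<bar>w\<bar>)"
    using assms by (intro exp_lower_Taylor_quadratic) simp
  moreover have "0 \<le> l*\<bar>w\<bar>" using assms by simp
  ultimately have "l\<^sup>2 * w\<^sup>2 \<le> 2 * exp (l*\<bar>w\<bar>)"
    by (simp add: power_mult_distrib)
  then show ?thesis using assms by (simp add: field_simps)
qed

lemma integrable_exp_abs_if_nn_integral_finite:
  assumes [measurable]: "h \<in> borel_measurable P"
    and fin: "(\<integral>\<^sup>+z. ennreal (exp (c * \<bar>h z\<bar>)) \<partial>P) < \<infinity>"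
  shows "integrable P (\<lambda>z. exp (c * \<bar>h z\<bar>))"
  using fin by (intro integrableI_bounded) simp_all

lemma has_exponential_moment_integrable:
  assumes [measurable]: "h \<in> borel_measurable P" and "has_exponential_moment P h"
  shows "integrable P h"
proof -
  obtain c where c: "c > 0" and fin: "(\<integral>\<^sup>+z. ennreal (exp (c * \<bar>h z\<bar>)) \<partial>P) < \<infinity>"
    using assms(2) unfolding has_exponential_moment_def by blast
  have "\<bar>h z\<bar> \<le> exp (c * \<bar>h z\<bar>) / c" for z
  proof -
    have "c * \<bar>h z\<bar> \<le> exp (c * \<bar>h z\<bar>)" using exp_ge_add_one_self[of "c * \<bar>h z\<bar>"] by linarith
    then show ?thesis using c by (simp add: field_simps)
  qed
  then show ?thesis
  proof (intro Bochner_Integration.integrable_bound[OF _ assms(1)] AE_I2)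
    show "integrable P (\<lambda>z. exp (c * \<bar>h z\<bar>) / c)"
      using integrable_exp_abs_if_nn_integral_finite[OF assms(1) fin] by simp
  qed (use c in simp)
qed

lemma integrable_square_exp_abs_if_nn_integral_finite:
  assumes [measurable]: "h \<in> borel_measurable P"
    and fin: "(\<integral>\<^sup>+z. ennreal (exp (c * \<bar>h z\<bar>)) \<partial>P) < \<infinity>"
    and l: "l > 0" "2*l \<le> c"
  shows "integrable P (\<lambda>z. (h z - \<mu>)\<^sup>2 * exp (l * \<bar>h z - \<mu>\<bar>))"
proof -
  define D where "D = 2/l\<^sup>2 * exp (2*l*\<bar>\<mu>\<bar>)"
  have bound: "(h z - \<mu>)\<^sup>2 * exp (l * \<bar>h z - \<mu>\<bar>) \<le> D * exp (c * \<bar>h z\<bar>)" for z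
  proof -
    define w where "w = h z - \<mu>"
    have "w\<^sup>2 * exp (l * \<bar>w\<bar>) \<le> (2/l\<^sup>2 * exp (l * \<bar>w\<bar>)) * exp (l * \<bar>w\<bar>)"
      by (rule mult_right_mono[OF square_le_exp_abs[OF l(1)]]) simp
    also have "\<dots> = 2/l\<^sup>2 * exp (2*l * \<bar>w\<bar>)"
      by (simp add: mult_exp_exp)
    also have "\<dots> \<le> 2/l\<^sup>2 * exp (c * \<bar>h z\<bar> + 2*l*\<bar>\<mu>\<bar>)"
    proof -
      have "\<bar>w\<bar> \<le> \<bar>h z\<bar> + \<bar>\<mu>\<bar>" unfolding w_def by (rule abs_triangle_ineq4)
      then have "2*l * \<bar>w\<bar> \<le> 2*l * \<bar>h z\<bar> + 2*l * \<bar>\<mu>\<bar>"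
        using l by (simp add: distrib_left[symmetric] mult_left_mono)
      also have "2*l * \<bar>h z\<bar> \<le> c * \<bar>h z\<bar>" using l by (simp add: mult_right_mono)
      finally show ?thesis using l by (intro mult_left_mono) auto
    qed
    also have "\<dots> = D * exp (c * \<bar>h z\<bar>)" by (simp add: D_def exp_add)
    finally show ?thesis by (simp add: w_def)
  qed
  have "D > 0" using l by (simp add: D_def)
  show ?thesis
  proof (rule Bochner_Integration.integrable_bound)
    show "integrable P (\<lambda>z. D * exp (c * \<bar>h z\<bar>))"
      using integrable_exp_abs_if_nn_integral_finite[OF assms(1) fin] by simp
    show "AE z in P. norm ((h z - \<mu>)\<^sup>2 * exp (l * \<bar>h z - \<mu>\<bar>)) \<le> norm (D * exp (c * \<bar>h z\<bar>))"
      using bound \<open>D > 0\<close> by (intro AE_I2) simp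
  qed measurable
qed

text \<open>Second-order Taylor bound on the moment generating function: for \<open>\<bar>r\<bar> \<le> c/4\<close>, the
  remainder term is dominated by an integrable function independent of r.\<close>
lemma has_exponential_moment_subexponential:
  assumes P: "prob_space P" and [measurable]: "h \<in> borel_measurable P"
    and "has_exponential_moment P h"
  shows "\<exists>l>0. \<exists>K>0. subexponential P h l K"
proof -
  interpret prob_space P by fact
  obtain c where c: "c > 0" and fin: "(\<integral>\<^sup>+z. ennreal (exp (c * \<bar>h z\<bar>)) \<partial>P) < \<infinity>"
    using assms(3) unfolding has_exponential_moment_def by blast
  have ih: "integrable P h" by (rule has_exponential_moment_integrable) fact+
  define l where "l = c/4"
  have l: "l > 0" "2*l \<le> c" using c by (simp_all add: l_def)
  define \<mu> where "\<mu> = (\<integral>z. h z \<partial>P)"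
  define G where "G z = (h z - \<mu>)\<^sup>2 * exp (l * \<bar>h z - \<mu>\<bar>)" for z
  have iG: "integrable P G"
    unfolding G_def by (rule integrable_square_exp_abs_if_nn_integral_finite[OF _ fin l]) simp
  define V where "V = (\<integral>z. G z \<partial>P)"
  have "0 \<le> V" unfolding V_def G_def by (intro integral_nonneg_AE AE_I2) simp
  define K where "K = V/2 + 1"
  have K: "K > 0" using \<open>0 \<le> V\<close> by (simp add: K_def)
  have "(\<integral>\<^sup>+z. ennreal (exp (r * (h z - \<mu>))) \<partial>P) \<le> ennreal (exp (K * r\<^sup>2))" if r: "\<bar>r\<bar> \<le> l" for r
  proof -
    have taylor: "exp (r * (h z - \<mu>)) \<le> 1 + r * (h z - \<mu>) + r\<^sup>2/2 * G z" for z
      unfolding G_def by (rule exp_mult_le_quadratic_bound[OF r])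
    have rhs_integrable: "integrable P (\<lambda>z. 1 + r * (h z - \<mu>) + r\<^sup>2/2 * G z)"
      using ih iG by simp
    have "(\<integral>\<^sup>+z. ennreal (exp (r * (h z - \<mu>))) \<partial>P)
        \<le> (\<integral>\<^sup>+z. ennreal (1 + r * (h z - \<mu>) + r\<^sup>2/2 * G z) \<partial>P)"
      by (intro nn_integral_mono ennreal_leI taylor)
    also have "\<dots> = ennreal (\<integral>z. 1 + r * (h z - \<mu>) + r\<^sup>2/2 * G z \<partial>P)"
      using taylor by (intro nn_integral_eq_integral[OF rhs_integrable] AE_I2) (meson exp_ge_zero order.trans)
    also have "(\<integral>z. 1 + r * (h z - \<mu>) + r\<^sup>2/2 * G z \<partial>P) = 1 + r\<^sup>2/2 * V"
      using ih iG by (simp add: V_def \<mu>_def prob_space algebra_simps)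
    also have "\<dots> \<le> 1 + K * r\<^sup>2"
      by (simp add: K_def algebra_simps)
    also have "\<dots> \<le> exp (K * r\<^sup>2)"
      by (rule exp_ge_add_one_self)
    finally show ?thesis by (simp add: ennreal_leI)
  qed
  then show ?thesis
    using l K unfolding subexponential_def \<mu>_def by blast
qed

lemma indep_sum_upper_tail:
  fixes W :: "nat \<Rightarrow> 'm \<Rightarrow> real"
  assumes M: "prob_space M" and ind: "prob_space.indep_vars M (\<lambda>_. borel) W UNIV"
    and mgf: "\<And>i r. \<bar>r\<bar> \<le> l \<Longrightarrow> (\<integral>\<^sup>+\<omega>. ennreal (exp (r * W i \<omega>)) \<partial>M) \<le> ennreal (exp (K * r\<^sup>2))"
    and K: "K > 0" and t: "t > 0" "t \<le> 2*K*l"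
  shows "measure M {\<omega>\<in>space M. real n * t \<le> (\<Sum>i<n. W i \<omega>)} \<le> exp (-(real n * t\<^sup>2 / (4*K)))"
proof -
  interpret prob_space M by fact
  have [measurable]: "W i \<in> borel_measurable M" for i using ind unfolding indep_vars_def by auto
  define r where "r = t/(2*K)"
  have r: "r > 0" "r \<le> l" using t K by (auto simp: r_def field_simps)
  have "emeasure M {\<omega>\<in>space M. (\<Sum>i<n. W i \<omega>) \<ge> real n * t} \<le>
      ennreal (exp (-r * (real n * t))) * (\<integral>\<^sup>+\<omega>. ennreal (exp (r * (\<Sum>i<n. W i \<omega>))) * indicator (space M) \<omega> \<partial>M)"
    using r(1) by (intro Chernoff_ineq_nn_integral_ge) auto
  also have "(\<integral>\<^sup>+\<omega>. ennreal (exp (r * (\<Sum>i<n. W i \<omega>))) * indicator (space M) \<omega> \<partial>M) =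
      (\<integral>\<^sup>+\<omega>. (\<Prod>i<n. ennreal (exp (r * W i \<omega>))) \<partial>M)"
    by (intro nn_integral_cong) (simp add: sum_distrib_left exp_sum prod_ennreal)
  also have "\<dots> = (\<Prod>i<n. \<integral>\<^sup>+\<omega>. ennreal (exp (r * W i \<omega>)) \<partial>M)"
  proof (rule indep_vars_nn_integral)
    have "indep_vars (\<lambda>_. borel) (\<lambda>i \<omega>. (\<lambda>x. ennreal (exp (r*x))) (W i \<omega>)) {..<n}"
      by (rule indep_vars_compose2[OF indep_vars_subset[OF ind]]) auto
    then show "indep_vars (\<lambda>_. borel) (\<lambda>i \<omega>. ennreal (exp (r * W i \<omega>))) {..<n}" by simp
  qed auto
  also have "ennreal (exp (-r * (real n * t))) * (\<Prod>i<n. \<integral>\<^sup>+\<omega>. ennreal (exp (r * W i \<omega>)) \<partial>M) \<le>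
      ennreal (exp (-r * (real n * t))) * (\<Prod>i<n. ennreal (exp (K * r\<^sup>2)))"
    by (intro mult_left_mono prod_mono_ennreal mgf) (use r in auto)
  also have "(\<Prod>i<n. ennreal (exp (K * r\<^sup>2))) = ennreal (exp (real n * (K * r\<^sup>2)))"
    by (simp add: prod_ennreal exp_of_nat_mult ennreal_power)
  also have "ennreal (exp (-r * (real n * t))) * ennreal (exp (real n * (K * r\<^sup>2))) =
      ennreal (exp (-(real n * t\<^sup>2 / (4*K))))"
  proof -
    have "-r * (real n * t) + real n * (K * r\<^sup>2) = -(real n * t\<^sup>2 / (4*K))"
      using K by (simp add: r_def field_simps power2_eq_square)
    then show ?thesis by (simp add: ennreal_mult[symmetric] exp_add[symmetric] del: ennreal_mult)
  qed
  finally show ?thesis by (simp add: emeasure_eq_measure)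
qed

lemma indep_sum_abs_tail:
  fixes W :: "nat \<Rightarrow> 'm \<Rightarrow> real"
  assumes M: "prob_space M" and ind: "prob_space.indep_vars M (\<lambda>_. borel) W UNIV"
    and mgf: "\<And>i r. \<bar>r\<bar> \<le> l \<Longrightarrow> (\<integral>\<^sup>+\<omega>. ennreal (exp (r * W i \<omega>)) \<partial>M) \<le> ennreal (exp (K * r\<^sup>2))"
    and K: "K > 0" and t: "t > 0" "t \<le> 2*K*l"
  shows "measure M {\<omega>\<in>space M. real n * t \<le> \<bar>\<Sum>i<n. W i \<omega>\<bar>} \<le> 2 * exp (-(real n * t\<^sup>2 / (4*K)))"
proof -
  interpret prob_space M by fact
  have [measurable]: "W i \<in> borel_measurable M" for i using ind unfolding indep_vars_def by auto
  have "indep_vars (\<lambda>_. borel) (\<lambda>i \<omega>. (\<lambda>x. - x) (W i \<omega>)) UNIV"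
    by (rule indep_vars_compose2[OF ind]) auto
  then have ind_neg: "indep_vars (\<lambda>_. borel) (\<lambda>i \<omega>. - W i \<omega>) UNIV" by simp
  have mgf_neg: "(\<integral>\<^sup>+\<omega>. ennreal (exp (r * (- W i \<omega>))) \<partial>M) \<le> ennreal (exp (K * r\<^sup>2))"
    if "\<bar>r\<bar> \<le> l" for i r
    using mgf[of "-r" i] that by simp
  have "{\<omega>\<in>space M. real n * t \<le> \<bar>\<Sum>i<n. W i \<omega>\<bar>} =
      {\<omega>\<in>space M. real n * t \<le> (\<Sum>i<n. W i \<omega>)} \<union> {\<omega>\<in>space M. real n * t \<le> (\<Sum>i<n. - W i \<omega>)}"
    by (auto simp: sum_negf abs_if)
  then have "measure M {\<omega>\<in>space M. real n * t \<le> \<bar>\<Sum>i<n. W i \<omega>\<bar>} \<le>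
      measure M {\<omega>\<in>space M. real n * t \<le> (\<Sum>i<n. W i \<omega>)}
      + measure M {\<omega>\<in>space M. real n * t \<le> (\<Sum>i<n. - W i \<omega>)}"
    by (simp add: measure_Un_le)
  moreover have "measure M {\<omega>\<in>space M. real n * t \<le> (\<Sum>i<n. W i \<omega>)} \<le> exp (-(real n * t\<^sup>2 / (4*K)))"
    by (rule indep_sum_upper_tail[OF M ind mgf K t])
  moreover have "measure M {\<omega>\<in>space M. real n * t \<le> (\<Sum>i<n. - W i \<omega>)} \<le> exp (-(real n * t\<^sup>2 / (4*K)))"
    by (rule indep_sum_upper_tail[OF M ind_neg mgf_neg K t])
  ultimately show ?thesis by linarith
qed

lemma iid_sum_deviation_tail:
  fixes Z :: "nat \<Rightarrow> 'm \<Rightarrow> 'o" and h :: "'o \<Rightarrow> real"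
  assumes M: "prob_space M" and ind: "prob_space.indep_vars M (\<lambda>_. N) Z UNIV"
    and law: "\<And>i. distr M N (Z i) = P" and [measurable]: "h \<in> borel_measurable N"
    and subexp: "subexponential P h l K" and K: "K > 0" and t: "t > 0" "t \<le> 2*K*l"
  shows "measure M {\<omega>\<in>space M. real n * t \<le> \<bar>\<Sum>i<n. h (Z i \<omega>) - (\<integral>z. h z \<partial>P)\<bar>}
    \<le> 2 * exp (-(real n * t\<^sup>2 / (4*K)))"
proof -
  interpret prob_space M by fact
  define \<mu> where "\<mu> = (\<integral>z. h z \<partial>P)"
  have Zm[measurable]: "Z i \<in> M \<rightarrow>\<^sub>M N" for i using ind unfolding indep_vars_def by auto
  have "indep_vars (\<lambda>_. borel) (\<lambda>i \<omega>. (\<lambda>z. h z - \<mu>) (Z i \<omega>)) UNIV"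
    by (rule indep_vars_compose2[OF ind]) auto
  then have ind_h: "indep_vars (\<lambda>_. borel) (\<lambda>i \<omega>. h (Z i \<omega>) - \<mu>) UNIV" by simp
  have mgf: "(\<integral>\<^sup>+\<omega>. ennreal (exp (r * (h (Z i \<omega>) - \<mu>))) \<partial>M) \<le> ennreal (exp (K * r\<^sup>2))"
    if "\<bar>r\<bar> \<le> l" for i r
  proof -
    have "(\<lambda>z. ennreal (exp (r * (h z - \<mu>)))) \<in> borel_measurable (distr M N (Z i))"
      by (subst measurable_cong_sets[OF sets_distr refl]) measurable
    from nn_integral_distr[OF Zm this]
    have "(\<integral>\<^sup>+\<omega>. ennreal (exp (r * (h (Z i \<omega>) - \<mu>))) \<partial>M)
        = (\<integral>\<^sup>+z. ennreal (exp (r * (h z - \<mu>))) \<partial>P)"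
      by (simp add: law)
    then show ?thesis using subexp that unfolding subexponential_def \<mu>_def by simp
  qed
  show ?thesis
    using indep_sum_abs_tail[OF M ind_h mgf K t] by (simp add: \<mu>_def)
qed

lemma iid_sums_jointly_concentrated:
  fixes Z :: "nat \<Rightarrow> 'm \<Rightarrow> 'o" and f g :: "'o \<Rightarrow> real"
  assumes M: "prob_space M" and ind: "prob_space.indep_vars M (\<lambda>_. N) Z UNIV"
    and law: "\<And>i. distr M N (Z i) = P"
    and [measurable]: "f \<in> borel_measurable N" "g \<in> borel_measurable N"
    and "subexponential P f l K" "subexponential P g l K"
    and K: "K > 0" and t: "t > 0" "t \<le> 2*K*l"
    and \<delta>: "4 * exp (-(real n * t\<^sup>2 / (4*K))) \<le> \<delta>"
  shows "\<exists>A \<in> sets M. 1 - \<delta> \<le> measure M A \<and>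
    (\<forall>\<omega>\<in>A. \<bar>\<Sum>i<n. f (Z i \<omega>) - (\<integral>z. f z \<partial>P)\<bar> < real n * t \<and>
            \<bar>\<Sum>i<n. g (Z i \<omega>) - (\<integral>z. g z \<partial>P)\<bar> < real n * t)"
proof -
  interpret prob_space M by fact
  have [measurable]: "Z i \<in> M \<rightarrow>\<^sub>M N" for i using ind unfolding indep_vars_def by auto
  define Ef where "Ef = {\<omega>\<in>space M. real n * t \<le> \<bar>\<Sum>i<n. f (Z i \<omega>) - (\<integral>z. f z \<partial>P)\<bar>}"
  define Eg where "Eg = {\<omega>\<in>space M. real n * t \<le> \<bar>\<Sum>i<n. g (Z i \<omega>) - (\<integral>z. g z \<partial>P)\<bar>}"
  have Ef: "Ef \<in> sets M" and Eg: "Eg \<in> sets M" unfolding Ef_def Eg_def by measurable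
  have "measure M Ef \<le> 2 * exp (-(real n * t\<^sup>2 / (4*K)))" "measure M Eg \<le> 2 * exp (-(real n * t\<^sup>2 / (4*K)))"
    unfolding Ef_def Eg_def using assms by (intro iid_sum_deviation_tail; blast)+
  then have "prob (Ef \<union> Eg) \<le> \<delta>"
    using measure_Un_le[OF Ef Eg] \<delta> by simp
  then have "1 - \<delta> \<le> prob (space M - (Ef \<union> Eg))"
    using prob_compl[of "Ef \<union> Eg"] Ef Eg by simp
  then show ?thesis
    by (intro bexI[of _ "space M - (Ef \<union> Eg)"]) (auto simp: Ef_def Eg_def)
qed

lemma subexponential_common_params:
  assumes "prob_space P" "f \<in> borel_measurable P" "g \<in> borel_measurable P"
    and "has_exponential_moment P f" "has_exponential_moment P g"
  shows "\<exists>l>0. \<exists>K>0. subexponential P f l K \<and> subexponential P g l K"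
proof -
  obtain lf Kf where "lf > 0" "Kf > 0" "subexponential P f lf Kf"
    using has_exponential_moment_subexponential assms by blast
  moreover obtain lg Kg where "lg > 0" "Kg > 0" "subexponential P g lg Kg"
    using has_exponential_moment_subexponential assms by blast
  ultimately show ?thesis
    using subexponential_mono[of P f lf Kf "min lf lg" "max Kf Kg"]
      subexponential_mono[of P g lg Kg "min lf lg" "max Kf Kg"]
    by (intro exI[of _ "min lf lg"] conjI exI[of _ "max Kf Kg"]) auto
qed

lemma four_exp_neg_three_confidence_le:
  fixes \<delta> :: real
  assumes "0 < \<delta>" "\<delta> < 1"
  shows "4 * exp (-(3 * (1 + ln (1/\<delta>)))) \<le> \<delta>"
proof -
  define L where "L = 1 + ln (1/\<delta>)"
  have "L \<ge> 1" using assms by (simp add: L_def ln_div)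
  have "4 * exp (-(3 * L)) = exp (ln 4 - 3*L)"
    by (simp add: exp_diff exp_minus field_simps)
  also have "\<dots> \<le> exp (1 - L)"
    using \<open>L \<ge> 1\<close> ln_le_minus_one[of 4] by simp
  also have "exp (1 - L) = \<delta>"
    using assms by (simp add: L_def ln_div)
  finally show ?thesis unfolding L_def .
qed

text \<open>The level \<open>t = sqrt (12KL/n)\<close>, with \<open>L = 1 + ln (1/\<delta>)\<close>, makes the Chernoff exponent
  \<open>nt\<^sup>2/(4K)\<close> equal to \<open>3L\<close>; the hypothesis on \<open>n/ln n\<close> forces \<open>t \<le> m\<close>.\<close>
lemma deviation_level_exists:
  fixes K m \<delta> :: real and n :: nat
  assumes K: "K > 0" and m: "m > 0" and \<delta>: "0 < \<delta>" "\<delta> < 1"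
    and n: "12*K / (ln 2 * m\<^sup>2) * (1 + ln (1/\<delta>)) \<le> real n / ln (real n)"
  shows "\<exists>t>0. t \<le> m \<and> 4 * exp (-(real n * t\<^sup>2 / (4*K))) \<le> \<delta> \<and>
           t \<le> sqrt (12*K / ln 2) * sqrt (ln (real n)) * sqrt ((1 + ln (1/\<delta>)) / real n)"
proof -
  define L where "L = 1 + ln (1/\<delta>)"
  have L: "L \<ge> 1" using \<delta> by (simp add: L_def ln_div)
  have C: "12*K / (ln 2 * m\<^sup>2) * L > 0" using K m L by simp
  have "n \<ge> 2"
  proof (rule ccontr)
    assume "\<not> n \<ge> 2"
    then have "real n / ln (real n) = 0" by (cases n) auto
    with n C show False by (simp add: L_def)
  qed
  then have ln2: "ln 2 \<le> ln (real n)" and lnn: "ln (real n) > 0" and np: "real n > 0"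
    by simp_all
  define t where "t = sqrt (12*K*L / real n)"
  have t: "t > 0" using K L np by (simp add: t_def)
  have t2: "t\<^sup>2 = 12*K*L / real n" using K L np by (simp add: t_def)
  have "real n * t\<^sup>2 / (4*K) = 3 * L"
    using K np by (simp add: t2)
  then have tail: "4 * exp (-(real n * t\<^sup>2 / (4*K))) \<le> \<delta>"
    using four_exp_neg_three_confidence_le[OF \<delta>] by (simp add: L_def)
  have "t\<^sup>2 = (12*K / (ln 2 * m\<^sup>2) * L) * (ln 2 * m\<^sup>2) / real n"
    using m by (simp add: t2)
  also have "\<dots> \<le> (real n / ln (real n)) * (ln 2 * m\<^sup>2) / real n"
    using n m np by (intro divide_right_mono mult_right_mono) (simp_all add: L_def)
  also have "\<dots> = ln 2 * m\<^sup>2 / ln (real n)"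
    using np by simp
  also have "\<dots> \<le> m\<^sup>2"
  proof -
    have "ln 2 * m\<^sup>2 \<le> ln (real n) * m\<^sup>2" using ln2 by (rule mult_right_mono) simp
    then show ?thesis using lnn by (simp add: divide_le_eq mult.commute)
  qed
  finally have "t \<le> m" by (rule power2_le_imp_le) (use m in simp)
  moreover have "t \<le> sqrt (12*K / ln 2) * sqrt (ln (real n)) * sqrt (L / real n)"
  proof -
    have "1 \<le> ln (real n) / ln 2" using ln2 by simp
    then have "12*K*L / real n * 1 \<le> 12*K*L / real n * (ln (real n) / ln 2)"
      using K L np by (intro mult_left_mono) simp_all
    then have "t \<le> sqrt (12*K*L / real n * (ln (real n) / ln 2))"
      unfolding t_def by simp
    also have "12*K*L / real n * (ln (real n) / ln 2) = 12*K / ln 2 * ln (real n) * (L / real n)"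
      by (simp add: ac_simps)
    finally show ?thesis by (simp only: real_sqrt_mult)
  qed
  ultimately show ?thesis using t tail unfolding L_def by blast
qed

lemma clipped_ratio_estimator_deviation:
  fixes Z :: "nat \<Rightarrow> 'm \<Rightarrow> 'o" and af bf qf :: "'o \<Rightarrow> real" and Obj :: "nat \<Rightarrow> 'm \<Rightarrow> real \<Rightarrow> real"
  assumes M: "prob_space M" and ind: "prob_space.indep_vars M (\<lambda>_. N) Z UNIV"
    and law: "\<And>i. distr M N (Z i) = P"
    and [measurable]: "af \<in> borel_measurable N" "bf \<in> borel_measurable N"
    and subexp: "subexponential P af l K" "subexponential P bf l K"
    and EB: "(\<integral>z. bf z \<partial>P) > 0" and lohi: "lo \<le> hi"
    and Obj: "\<And>\<omega>. Obj n \<omega> = (\<lambda>\<beta>. (1/real n) * (\<Sum>i<n. qf (Z i \<omega>) - 2*\<beta>*af (Z i \<omega>) + \<beta>\<^sup>2*bf (Z i \<omega>)))"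
    and K: "K > 0" and t: "t > 0" "t \<le> 2*K*l" "t \<le> (\<integral>z. bf z \<partial>P) / 2"
    and \<delta>: "4 * exp (-(real n * t\<^sup>2 / (4*K))) \<le> \<delta>"
  shows "\<exists>A \<in> sets M. 1 - \<delta> \<le> measure M A \<and>
    (\<forall>\<omega>\<in>A. \<forall>\<beta>hat. is_arg_min (Obj n \<omega>) (\<lambda>\<beta>. \<beta> \<in> {lo..hi}) \<beta>hat \<longrightarrow>
       \<bar>\<beta>hat - max lo (min hi ((\<integral>z. af z \<partial>P) / (\<integral>z. bf z \<partial>P)))\<bar>
         \<le> 2*((\<integral>z. bf z \<partial>P) + \<bar>\<integral>z. af z \<partial>P\<bar>) / (\<integral>z. bf z \<partial>P)\<^sup>2 * t)"
proof -
  obtain A where "A \<in> sets M" "1 - \<delta> \<le> measure M A"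
    and close: "\<forall>\<omega>\<in>A. \<bar>\<Sum>i<n. af (Z i \<omega>) - (\<integral>z. af z \<partial>P)\<bar> < real n * t \<and>
                      \<bar>\<Sum>i<n. bf (Z i \<omega>) - (\<integral>z. bf z \<partial>P)\<bar> < real n * t"
    using iid_sums_jointly_concentrated[OF M ind law _ _ subexp K t(1,2) \<delta>] by auto
  moreover have "\<bar>\<beta>hat - max lo (min hi ((\<integral>z. af z \<partial>P) / (\<integral>z. bf z \<partial>P)))\<bar>
      \<le> 2*((\<integral>z. bf z \<partial>P) + \<bar>\<integral>z. af z \<partial>P\<bar>) / (\<integral>z. bf z \<partial>P)\<^sup>2 * t"
    if "\<omega> \<in> A" "is_arg_min (Obj n \<omega>) (\<lambda>\<beta>. \<beta> \<in> {lo..hi}) \<beta>hat" for \<omega> \<beta>hat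
    using close that t(3) unfolding Obj
    by (intro arg_min_empirical_quadratic_error[OF lohi EB]) auto
  ultimately show ?thesis by blast
qed

lemma clipped_ratio_estimator_rate:
  fixes Z :: "nat \<Rightarrow> 'm \<Rightarrow> 'o" and af bf qf :: "'o \<Rightarrow> real" and Obj :: "nat \<Rightarrow> 'm \<Rightarrow> real \<Rightarrow> real"
  assumes M: "prob_space M" and ind: "prob_space.indep_vars M (\<lambda>_. N) Z UNIV"
    and law: "\<And>i. distr M N (Z i) = P"
    and afN: "af \<in> borel_measurable N" and bfN: "bf \<in> borel_measurable N"
    and "has_exponential_moment P af" "has_exponential_moment P bf"
    and EB: "(\<integral>z. bf z \<partial>P) > 0" and lohi: "lo \<le> hi"
    and Obj: "\<And>n \<omega>. Obj n \<omega> = (\<lambda>\<beta>. (1/real n) * (\<Sum>i<n. qf (Z i \<omega>) - 2*\<beta>*af (Z i \<omega>) + \<beta>\<^sup>2*bf (Z i \<omega>)))"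
  shows "\<exists>C>0. \<exists>C'>0. \<forall>(n::nat) (\<delta>::real). 0 < \<delta> \<and> \<delta> < 1 \<and>
      real n / ln (real n) \<ge> C * (1 + ln (1 / \<delta>)) \<longrightarrow>
      (\<exists>A \<in> sets M. measure M A \<ge> 1 - \<delta> \<and>
        (\<forall>\<omega>\<in>A. \<forall>\<beta>hat. is_arg_min (Obj n \<omega>) (\<lambda>\<beta>. \<beta> \<in> {lo..hi}) \<beta>hat \<longrightarrow>
          \<bar>\<beta>hat - max lo (min hi ((\<integral>z. af z \<partial>P) / (\<integral>z. bf z \<partial>P)))\<bar>
            \<le> C' * sqrt (ln (real n)) * sqrt ((1 + ln (1 / \<delta>)) / real n)))"
proof -
  interpret M: prob_space M by fact
  have Z0: "Z 0 \<in> M \<rightarrow>\<^sub>M N" using ind unfolding M.indep_vars_def by auto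
  have P: "prob_space P" using M.prob_space_distr[OF Z0] law[of 0] by simp
  have "sets P = sets N" using sets_distr[of M N "Z 0"] law[of 0] by simp
  then have "af \<in> borel_measurable P" "bf \<in> borel_measurable P"
    using afN bfN measurable_cong_sets[of P N borel borel] by auto
  then obtain l K where lK: "l > 0" "K > 0" and subexp: "subexponential P af l K" "subexponential P bf l K"
    using subexponential_common_params[OF P] assms(6,7) by blast
  define m where "m = min (2*K*l) ((\<integral>z. bf z \<partial>P) / 2)"
  define R where "R = 2*((\<integral>z. bf z \<partial>P) + \<bar>\<integral>z. af z \<partial>P\<bar>) / (\<integral>z. bf z \<partial>P)\<^sup>2"
  have m: "m > 0" and R: "R > 0" using lK EB by (simp_all add: m_def R_def add_pos_nonneg)
  have "\<exists>A \<in> sets M. 1 - \<delta> \<le> measure M A \<and>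
      (\<forall>\<omega>\<in>A. \<forall>\<beta>hat. is_arg_min (Obj n \<omega>) (\<lambda>\<beta>. \<beta> \<in> {lo..hi}) \<beta>hat \<longrightarrow>
        \<bar>\<beta>hat - max lo (min hi ((\<integral>z. af z \<partial>P) / (\<integral>z. bf z \<partial>P)))\<bar>
          \<le> R * sqrt (12*K / ln 2) * sqrt (ln (real n)) * sqrt ((1 + ln (1 / \<delta>)) / real n))"
    if \<delta>: "0 < \<delta>" "\<delta> < 1" and n: "12*K / (ln 2 * m\<^sup>2) * (1 + ln (1 / \<delta>)) \<le> real n / ln (real n)"
    for n \<delta>
  proof -
    obtain t where t: "t > 0" "t \<le> m" "4 * exp (-(real n * t\<^sup>2 / (4*K))) \<le> \<delta>"
      and t_rate: "t \<le> sqrt (12*K / ln 2) * sqrt (ln (real n)) * sqrt ((1 + ln (1/\<delta>)) / real n)"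
      using deviation_level_exists[OF lK(2) m \<delta> n] by blast
    have "R * t \<le> R * sqrt (12*K / ln 2) * sqrt (ln (real n)) * sqrt ((1 + ln (1 / \<delta>)) / real n)"
      using mult_left_mono[OF t_rate, of R] R by (simp add: mult.assoc)
    with clipped_ratio_estimator_deviation[where n=n and Obj=Obj, OF M ind law afN bfN subexp EB lohi Obj[of n] lK(2) t(1) _ _ t(3)] t(2)
    show ?thesis unfolding m_def R_def by fastforce
  qed
  then show ?thesis
    using lK m R by (intro exI[of _ "12*K / (ln 2 * m\<^sup>2)"] conjI exI[of _ "R * sqrt (12*K / ln 2)"]) auto
qed

lemma norm_diff_scaleR_square:
  fixes x g :: "'a::real_inner"
  shows "(norm (x - b *\<^sub>R g))\<^sup>2 = (norm x)\<^sup>2 - 2*b*(x \<bullet> g) + b\<^sup>2*(norm g)\<^sup>2"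
  unfolding power2_norm_eq_inner
  by (simp add: inner_diff_left inner_diff_right inner_commute power2_eq_square algebra_simps)

lemma population_risk_arg_min:
  fixes x g :: "'a \<Rightarrow> real^'d"
  assumes P: "prob_space P" and sx: "subgaussian_vec P x" and sg: "subgaussian_vec P g"
    and lohi: "lo \<le> hi" and pos: "(\<integral>z. (norm (g z))\<^sup>2 \<partial>P) > 0"
    and am: "is_arg_min (\<lambda>\<beta>. \<integral>z. (norm (x z - \<beta> *\<^sub>R g z))\<^sup>2 \<partial>P) (\<lambda>\<beta>. \<beta> \<in> {lo..hi}) b"
  shows "b = max lo (min hi ((\<integral>z. x z \<bullet> g z \<partial>P) / (\<integral>z. (norm (g z))\<^sup>2 \<partial>P)))"
proof -
  have [measurable]: "x \<in> borel_measurable P" "g \<in> borel_measurable P"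
    using sx sg unfolding subgaussian_vec_def by blast+
  have "integrable P (\<lambda>z. x z \<bullet> g z)" "integrable P (\<lambda>z. (norm (x z))\<^sup>2)" "integrable P (\<lambda>z. (norm (g z))\<^sup>2)"
    unfolding power2_norm_eq_inner
    by (intro has_exponential_moment_integrable subgaussian_vec_inner_exponential_moment[OF P]
        sx sg borel_measurable_inner; measurable)+
  then have "(\<lambda>\<beta>. \<integral>z. (norm (x z - \<beta> *\<^sub>R g z))\<^sup>2 \<partial>P)
      = (\<lambda>\<beta>. (\<integral>z. (norm (x z))\<^sup>2 \<partial>P) - 2*\<beta>*(\<integral>z. x z \<bullet> g z \<partial>P) + \<beta>\<^sup>2*(\<integral>z. (norm (g z))\<^sup>2 \<partial>P))"
    by (simp add: norm_diff_scaleR_square)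
  with am show ?thesis
    using is_arg_min_quadratic_on_interval[OF lohi pos] by simp
qed

theorem claim2:
  fixes M :: "'m measure"
    and T :: "'t measure" and Y :: "'y measure"
    and P :: "('t \<times> (real^'d) \<times> 'y) measure"
    and u :: "'t \<Rightarrow> real^'d \<Rightarrow> real"
    and \<Theta>s :: "nat \<Rightarrow> 'm \<Rightarrow> 't" and X :: "nat \<Rightarrow> 'm \<Rightarrow> real^'d" and Ys :: "nat \<Rightarrow> 'm \<Rightarrow> 'y"
    and \<beta>min \<beta>max \<beta>star :: real
  assumes "prob_space M"
    and "0 < \<beta>min" and "\<beta>min \<le> \<beta>max"
    and diff: "\<And>\<theta> x. \<theta> \<in> space T \<Longrightarrow> u \<theta> differentiable (at x)"
    and grad_meas: "(\<lambda>(\<theta>, x). grad (u \<theta>) x) \<in> borel_measurable (T \<Otimes>\<^sub>M borel)"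
    and P_prob: "prob_space P"
    and P_sets: "sets P = sets (T \<Otimes>\<^sub>M borel \<Otimes>\<^sub>M Y)"
    and iid_indep: "prob_space.indep_vars M (\<lambda>_. T \<Otimes>\<^sub>M borel \<Otimes>\<^sub>M Y)
                      (\<lambda>i \<omega>. (\<Theta>s i \<omega>, X i \<omega>, Ys i \<omega>)) UNIV"
    and iid_law: "\<And>i. distr M (T \<Otimes>\<^sub>M borel \<Otimes>\<^sub>M Y) (\<lambda>\<omega>. (\<Theta>s i \<omega>, X i \<omega>, Ys i \<omega>)) = P"
    and pos: "(\<integral>z. (norm (grad (u (fst z)) (fst (snd z))))\<^sup>2 \<partial>P) > 0"
    and subg_x: "subgaussian_vec P (\<lambda>z. fst (snd z))"
    and subg_g: "subgaussian_vec P (\<lambda>z. grad (u (fst z)) (fst (snd z)))"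
    and \<beta>star: "is_arg_min
                 (\<lambda>\<beta>. \<integral>z. (norm (fst (snd z) - \<beta> *\<^sub>R grad (u (fst z)) (fst (snd z))))\<^sup>2 \<partial>P)
                 (\<lambda>\<beta>. \<beta> \<in> {\<beta>min..\<beta>max}) \<beta>star"
  shows "\<exists>C>0. \<exists>C'>0. \<forall>(n::nat) (\<delta>::real). 0 < \<delta> \<and> \<delta> < 1 \<and>
            real n / ln (real n) \<ge> C * (1 + ln (1 / \<delta>)) \<longrightarrow>
            (\<exists>A \<in> sets M. measure M A \<ge> 1 - \<delta> \<and>
               (\<forall>\<omega>\<in>A. \<forall>\<beta>hat. is_arg_min
                   (\<lambda>\<beta>. (1 / real n) * (\<Sum>i<n. (norm (X i \<omega> - \<beta> *\<^sub>R grad (u (\<Theta>s i \<omega>)) (X i \<omega>)))\<^sup>2))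
                   (\<lambda>\<beta>. \<beta> \<in> {\<beta>min..\<beta>max}) \<beta>hat \<longrightarrow>
                 \<bar>\<beta>hat - \<beta>star\<bar> \<le> C' * sqrt (ln (real n)) * sqrt ((1 + ln (1 / \<delta>)) / real n)))"
proof -
  define af where "af z = fst (snd z) \<bullet> grad (u (fst z)) (fst (snd z))" for z :: "'t \<times> (real^'d) \<times> 'y"
  define bf where "bf z = (norm (grad (u (fst z)) (fst (snd z))))\<^sup>2" for z :: "'t \<times> (real^'d) \<times> 'y"
  define qf where "qf z = (norm (fst (snd z)))\<^sup>2" for z :: "'t \<times> (real^'d) \<times> 'y"
  have [measurable]: "(\<lambda>z. fst (snd z)) \<in> borel_measurable P"
    "(\<lambda>z. grad (u (fst z)) (fst (snd z))) \<in> borel_measurable P"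
    using subg_x subg_g unfolding subgaussian_vec_def by blast+
  have "af \<in> borel_measurable P" "bf \<in> borel_measurable P"
    unfolding af_def bf_def by measurable
  then have af_N: "af \<in> borel_measurable (T \<Otimes>\<^sub>M borel \<Otimes>\<^sub>M Y)"
    and bf_N: "bf \<in> borel_measurable (T \<Otimes>\<^sub>M borel \<Otimes>\<^sub>M Y)"
    using measurable_cong_sets[OF P_sets refl, of borel] by auto
  have moments: "has_exponential_moment P af" "has_exponential_moment P bf"
    using subgaussian_vec_inner_exponential_moment[OF P_prob subg_x subg_g]
      subgaussian_vec_inner_exponential_moment[OF P_prob subg_g subg_g]
    unfolding af_def bf_def power2_norm_eq_inner by simp_all
  have objective: "(\<lambda>\<beta>. (1 / real n) * (\<Sum>i<n. (norm (X i \<omega> - \<beta> *\<^sub>R grad (u (\<Theta>s i \<omega>)) (X i \<omega>)))\<^sup>2))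
      = (\<lambda>\<beta>. (1 / real n) * (\<Sum>i<n. qf (\<Theta>s i \<omega>, X i \<omega>, Ys i \<omega>) - 2*\<beta>*af (\<Theta>s i \<omega>, X i \<omega>, Ys i \<omega>)
                                 + \<beta>\<^sup>2*bf (\<Theta>s i \<omega>, X i \<omega>, Ys i \<omega>)))" for n \<omega>
    by (simp add: norm_diff_scaleR_square af_def bf_def qf_def)
  show ?thesis
    unfolding population_risk_arg_min[OF P_prob subg_x subg_g assms(3) pos \<beta>star]
      af_def[symmetric] bf_def[symmetric]
    by (rule clipped_ratio_estimator_rate[OF assms(1) iid_indep iid_law af_N bf_N moments
          pos[folded bf_def] assms(3) objective])
qed

end
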